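(* Let $P$ be as in the context. If $x_a\ge x_\theta\ge0$ and $x_b\ge0$, then $$P(x_a,x_b,x_\theta)\ge\tfrac12\big(1-\Phi(x_a-x_\theta)\big)+\tfrac12\big(1-\Phi(x_a+x_\theta)\big).$$ If $0\le x_a<x_\theta$ and $x_b\ge0$, then $P(x_a,x_b,x_\theta)\ge\tfrac14$.
   Context: $\phi$ and $\Phi$ are the standard normal density and CDF. For $y,x_b\in\mathbb{R}$, $w(y,x_b)=\frac{e^{yx_b}}{e^{yx_b}+e^{-yx_b}}$, and $P(x_a,x_b,x_\theta)=\int_{\mathbb{R}}w(y-x_a,x_b)\,\tfrac12\big(\phi(y-x_\theta)+\phi(y+x_\theta)\big)dy$. *)

theory Defs
  imports "HOL-Probability.Probability"
begin

definition Phi :: "real \<Rightarrow> real" where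
  "Phi x = (LBINT t:{..x}. std_normal_density t)"

definition wfun :: "real \<Rightarrow> real \<Rightarrow> real" where
  "wfun y xb = exp (y * xb) / (exp (y * xb) + exp (- (y * xb)))"

definition Pfun :: "real \<Rightarrow> real \<Rightarrow> real \<Rightarrow> real" where
  "Pfun xa xb xth = (LBINT y. wfun (y - xa) xb *
      ((1/2) * (std_normal_density (y - xth) + std_normal_density (y + xth))))"

end

theory Submission
  imports Defs
begin

text \<open>Substituting \<open>z = y - x\<^sub>a\<close> writes \<open>P\<close> as the average of the two integrals
  \<open>I(c) = \<integral> w(z, x\<^sub>b) \<phi>(z + c) dz\<close> with \<open>c = x\<^sub>a \<mp> x\<^sub>\<theta>\<close>. Because \<open>w(-z) = 1 - w(z)\<close>,
  \<open>I(c)\<close> can be compared with another integral by comparing the integrands after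
  symmetrising them under \<open>z \<mapsto> -z\<close>; the symmetrised integrand of \<open>I(c)\<close> is then a convex
  combination of \<open>\<phi>(z + c)\<close> and \<open>\<phi>(c - z)\<close>. For \<open>c \<ge> 0\<close> and \<open>z > 0\<close> the smaller of the two is
  \<open>\<phi>(z + c)\<close>, which gives \<open>I(c) \<ge> \<integral>\<^sub>z\<^sub>>\<^sub>0 \<phi>(z + c) dz = 1 - \<Phi>(c)\<close>. For \<open>c \<le> 0\<close> the weight
  \<open>w \<ge> 1/2\<close> falls exactly on the larger of the two, which gives \<open>I(c) \<ge> 1/2\<close>.\<close>

lemma wfun_pos: "0 < wfun z b"
  and wfun_le_one: "wfun z b \<le> 1"
  unfolding wfun_def by (auto simp: divide_simps add_pos_pos)

lemma wfun_minus: "wfun (- z) b = 1 - wfun z b"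
proof -
  have "exp (z * b) + exp (- (z * b)) > 0" by (simp add: add_pos_pos)
  then show ?thesis unfolding wfun_def by (simp add: field_simps)
qed

lemma wfun_ge_half:
  assumes "0 \<le> z" "0 \<le> b"
  shows "1/2 \<le> wfun z b"
proof -
  have "exp (- (z * b)) \<le> exp (z * b)" using assms by simp
  moreover have "exp (z * b) + exp (- (z * b)) > 0" by (simp add: add_pos_pos)
  ultimately show ?thesis unfolding wfun_def by (simp add: field_simps)
qed

lemma borel_measurable_wfun [measurable]: "(\<lambda>z. wfun z b) \<in> borel_measurable borel"
  unfolding wfun_def by measurable

lemma std_normal_density_add_le_diff:
  fixes z c :: real
  assumes "0 \<le> z * c"
  shows "std_normal_density (z + c) \<le> std_normal_density (c - z)"
proof -
  have "(c - z)\<^sup>2 \<le> (z + c)\<^sup>2" using assms by (simp add: power2_eq_square algebra_simps)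
  then show ?thesis unfolding std_normal_density_def by (auto intro!: divide_right_mono)
qed

lemma integrable_std_normal_density_shift: "integrable lborel (\<lambda>z. std_normal_density (z + c))"
  using lborel_integrable_real_affine[of std_normal_density 1 c] by (simp add: add.commute)

lemma integral_std_normal_density_shift: "(\<integral>z. std_normal_density (z + c) \<partial>lborel) = 1"
  using lborel_integral_real_affine[of 1 std_normal_density c] by (simp add: add.commute)

lemma integrable_wfun_std_normal_density:
  "integrable lborel (\<lambda>z. wfun z b * std_normal_density (z + c))"
proof (rule Bochner_Integration.integrable_bound[OF integrable_std_normal_density_shift[of c]])
  show "(\<lambda>z. wfun z b * std_normal_density (z + c)) \<in> borel_measurable lborel" by measurable
  show "AE z in lborel.
      norm (wfun z b * std_normal_density (z + c)) \<le> norm (std_normal_density (z + c))"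
  proof (rule AE_I2)
    fix z
    have "\<bar>wfun z b\<bar> \<le> 1" using wfun_pos[of z b] wfun_le_one[of z b] by simp
    then show "norm (wfun z b * std_normal_density (z + c)) \<le> norm (std_normal_density (z + c))"
      by (simp add: abs_mult mult_left_le_one_le)
  qed
qed

lemma integrable_reflect:
  fixes f :: "real \<Rightarrow> real"
  assumes "integrable lborel f"
  shows "integrable lborel (\<lambda>z. f (- z))"
  using lborel_integrable_real_affine[OF assms, of "-1" 0] by simp

lemma integral_add_reflect:
  fixes f :: "real \<Rightarrow> real"
  assumes "integrable lborel f"
  shows "(\<integral>z. f z + f (- z) \<partial>lborel) = 2 * (\<integral>z. f z \<partial>lborel)"
proof -
  have "(\<integral>z. f (- z) \<partial>lborel) = (\<integral>z. f z \<partial>lborel)"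
    using lborel_integral_real_affine[of "-1" f 0] by simp
  then show ?thesis using assms integrable_reflect[OF assms] by simp
qed

lemma integral_mono_reflect:
  fixes f g :: "real \<Rightarrow> real"
  assumes f: "integrable lborel f" and g: "integrable lborel g"
    and le: "\<And>z. f z + f (- z) \<le> g z + g (- z)"
  shows "(\<integral>z. f z \<partial>lborel) \<le> (\<integral>z. g z \<partial>lborel)"
proof -
  have "(\<integral>z. f z + f (- z) \<partial>lborel) \<le> (\<integral>z. g z + g (- z) \<partial>lborel)"
    using f g le by (intro integral_mono Bochner_Integration.integrable_add integrable_reflect)
  then show ?thesis using integral_add_reflect[OF f] integral_add_reflect[OF g] by simp
qed

lemma one_minus_Phi: "1 - Phi c = (\<integral>z. indicator {0<..} z * std_normal_density (z + c) \<partial>lborel)"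
proof -
  let ?tail = "\<lambda>x. std_normal_density x * indicator {c<..} x :: real"
  have "(\<integral>x. ?tail x \<partial>lborel) = (\<integral>z. indicator {0<..} z * std_normal_density (z + c) \<partial>lborel)"
    using lborel_integral_real_affine[of 1 ?tail c]
    by (simp add: indicator_def add.commute mult.commute)
  moreover have "Phi c + (\<integral>x. ?tail x \<partial>lborel)
      = (\<integral>x. std_normal_density x * indicator {..c} x + ?tail x \<partial>lborel)"
    unfolding Phi_def set_lebesgue_integral_def
    by (simp add: mult.commute integrable_real_mult_indicator)
  moreover have "(\<lambda>x. std_normal_density x * indicator {..c} x + ?tail x) = std_normal_density"
    by (auto simp: indicator_def)
  ultimately show ?thesis by simp
qed

lemma integral_wfun_std_normal_density_ge_tail:
  assumes "0 \<le> c" "0 \<le> b"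
  shows "1 - Phi c \<le> (\<integral>z. wfun z b * std_normal_density (z + c) \<partial>lborel)"
  unfolding one_minus_Phi
proof (rule integral_mono_reflect)
  show "integrable lborel (\<lambda>z. indicator {0<..} z * std_normal_density (z + c) :: real)"
    using integrable_real_mult_indicator[OF _ integrable_std_normal_density_shift[of c], of "{0<..}"]
    by (simp add: mult.commute)
  show "integrable lborel (\<lambda>z. wfun z b * std_normal_density (z + c))"
    by (rule integrable_wfun_std_normal_density)
  fix z :: real
  have w: "0 \<le> wfun z b" "wfun z b \<le> 1" using wfun_pos[of z b] wfun_le_one[of z b] by auto
  consider "0 < z" | "z < 0" | "z = 0" by linarith
  then show "indicator {0<..} z * std_normal_density (z + c)
      + indicator {0<..} (- z) * std_normal_density (- z + c)
    \<le> wfun z b * std_normal_density (z + c) + wfun (- z) b * std_normal_density (- z + c)"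
  proof cases
    case 1
    then have "std_normal_density (z + c) \<le> std_normal_density (c - z)"
      using assms by (intro std_normal_density_add_le_diff) simp
    with w have "0 \<le> (1 - wfun z b) * (std_normal_density (c - z) - std_normal_density (z + c))"
      by simp
    with 1 show ?thesis by (simp add: wfun_minus algebra_simps)
  next
    case 2
    then have "std_normal_density (c - z) \<le> std_normal_density (z + c)"
      using assms std_normal_density_add_le_diff[of "- z" c]
      by (simp add: mult_nonpos_nonneg add.commute)
    with w have "0 \<le> wfun z b * (std_normal_density (z + c) - std_normal_density (c - z))"
      by simp
    with 2 show ?thesis by (simp add: wfun_minus algebra_simps)
  next
    case 3
    with w show ?thesis by simp
  qed
qed

lemma integral_wfun_std_normal_density_ge_half:
  assumes "c \<le> 0" "0 \<le> b"
  shows "1/2 \<le> (\<integral>z. wfun z b * std_normal_density (z + c) \<partial>lborel)"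
proof -
  have "(\<integral>z. 1/2 * std_normal_density (z + c) \<partial>lborel)
      \<le> (\<integral>z. wfun z b * std_normal_density (z + c) \<partial>lborel)"
  proof (rule integral_mono_reflect)
    show "integrable lborel (\<lambda>z. 1/2 * std_normal_density (z + c))"
      using integrable_std_normal_density_shift by simp
    show "integrable lborel (\<lambda>z. wfun z b * std_normal_density (z + c))"
      by (rule integrable_wfun_std_normal_density)
    fix z :: real
    have "0 \<le> (wfun z b - 1/2) * (std_normal_density (z + c) - std_normal_density (c - z))"
    proof (cases "0 \<le> z")
      case True
      then have "std_normal_density (c - z) \<le> std_normal_density (z + c)"
        using assms std_normal_density_add_le_diff[of "- z" c]
        by (simp add: mult_nonneg_nonpos add.commute)
      with wfun_ge_half[OF True assms(2)] show ?thesis by simp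
    next
      case False
      then have "std_normal_density (z + c) \<le> std_normal_density (c - z)"
        using assms by (intro std_normal_density_add_le_diff) (simp add: mult_nonpos_nonpos)
      moreover have "wfun z b \<le> 1/2"
        using False wfun_ge_half[of "- z" b] assms(2) by (simp add: wfun_minus)
      ultimately show ?thesis by (simp add: mult_nonpos_nonpos)
    qed
    then show "1/2 * std_normal_density (z + c) + 1/2 * std_normal_density (- z + c)
      \<le> wfun z b * std_normal_density (z + c) + wfun (- z) b * std_normal_density (- z + c)"
      by (simp add: wfun_minus algebra_simps)
  qed
  then show ?thesis using integral_std_normal_density_shift[of c] by simp
qed

lemma Pfun_eq_average:
  "Pfun xa b t = 1/2 * (\<integral>z. wfun z b * std_normal_density (z + (xa - t)) \<partial>lborel)
     + 1/2 * (\<integral>z. wfun z b * std_normal_density (z + (xa + t)) \<partial>lborel)"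
proof -
  let ?F = "\<lambda>y. wfun (y - xa) b *
    (1/2 * (std_normal_density (y - t) + std_normal_density (y + t)))"
  have "Pfun xa b t = (\<integral>z. ?F (z + xa) \<partial>lborel)"
    using lborel_integral_real_affine[of 1 ?F xa] unfolding Pfun_def by (simp add: add.commute)
  also have "\<dots> = (\<integral>z. 1/2 * (wfun z b * std_normal_density (z + (xa - t)))
      + 1/2 * (wfun z b * std_normal_density (z + (xa + t))) \<partial>lborel)"
    by (simp add: algebra_simps)
  finally show ?thesis by (simp add: integrable_wfun_std_normal_density)
qed

theorem lemma13:
  fixes xa xb xth :: real
  shows "(xa \<ge> xth \<and> xth \<ge> 0 \<and> xb \<ge> 0 \<longrightarrow>
           Pfun xa xb xth \<ge> (1/2) * (1 - Phi (xa - xth)) + (1/2) * (1 - Phi (xa + xth)))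
       \<and> (0 \<le> xa \<and> xa < xth \<and> xb \<ge> 0 \<longrightarrow> Pfun xa xb xth \<ge> 1/4)"
proof (intro conjI impI)
  assume "xa \<ge> xth \<and> xth \<ge> 0 \<and> xb \<ge> 0"
  then have "1 - Phi (xa - xth) \<le> (\<integral>z. wfun z xb * std_normal_density (z + (xa - xth)) \<partial>lborel)"
    and "1 - Phi (xa + xth) \<le> (\<integral>z. wfun z xb * std_normal_density (z + (xa + xth)) \<partial>lborel)"
    by (auto intro!: integral_wfun_std_normal_density_ge_tail)
  then show "Pfun xa xb xth \<ge> (1/2) * (1 - Phi (xa - xth)) + (1/2) * (1 - Phi (xa + xth))"
    unfolding Pfun_eq_average by (intro add_mono mult_left_mono) simp_all
next
  assume "0 \<le> xa \<and> xa < xth \<and> xb \<ge> 0"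
  then have "1/2 \<le> (\<integral>z. wfun z xb * std_normal_density (z + (xa - xth)) \<partial>lborel)"
    by (intro integral_wfun_std_normal_density_ge_half) auto
  moreover have "0 \<le> (\<integral>z. wfun z xb * std_normal_density (z + (xa + xth)) \<partial>lborel)"
    by (simp add: wfun_pos less_imp_le)
  ultimately show "Pfun xa xb xth \<ge> 1/4"
    unfolding Pfun_eq_average by linarith
qed

end
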